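(* Let $\partial$ be an intrinsic dimension function (in the sense defined in the context), and let $(X,d,\mu)$ be a space with metric and measure such that the support of $\mu$ is all of $X$. Then $\partial(X)=+\infty$ if and only if $X$ is a singleton, $X\simeq\{\ast\}$.
   Context: A space with metric and measure is a triple $(X,d,\mu)$ where $(X,d)$ is a metric space and $\mu$ is a (Borel) probability measure on $X$. A feature is a $1$-Lipschitz function $f\colon X\to\mathbb R$, i.e. $|f(x)-f(y)|\le d(x,y)$; $\mathcal{L}ip_1(X)$ denotes the set of all of them. For such $f$, $M_f$ denotes a median: $\mu\{f\ge M_f\}\ge 1/2$ and $\mu\{f\le M_f\}\ge 1/2$. The concentration function of $X$ is $\alpha_X(0)=1/2$ and, for $\varepsilon>0$, $\alpha_X(\varepsilon)=\sup_{f\in\mathcal{L}ip_1(X)}\mu\{x: f(x)\ge M_f+\varepsilon\}$ (equivalently $1-\inf\{\mu(A_\varepsilon):\mu(A)\ge 1/2\}$, where $A_\varepsilon$ is the open $\varepsilon$-neighbourhood of $A$). A sequence $(X_n)$ of spaces with metric and measure is a Lévy family if $\alpha_{X_n}(\varepsilon)\to 0$ for every $\varepsilon>0$. Gromov distance: a parametrization of $(X,\mu)$ is a map $\phi\colon[0,1]\to X$ such that $\mu(A)$ equals the Lebesgue measure of $\phi^{-1}(A)$ for all (measurable) $A\subseteq X$. On measurable functions on $[0,1]$ use the metric of convergence in measure $\mathrm{me}_1(f,g)=\inf\{\varepsilon>0: \lambda\{t:|f(t)-g(t)|>\varepsilon\}<\varepsilon\}$ ($\lambda$ = Lebesgue measure).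 The Gromov distance $d_{conc}(X,Y)$ is the infimum, over all parametrizations $\phi$ of $X$ and $\psi$ of $Y$, of the Hausdorff distance (with respect to $\mathrm{me}_1$) between $\{f\circ\phi: f\in\mathcal{L}ip_1(X)\}$ and $\{g\circ\psi: g\in\mathcal{L}ip_1(Y)\}$. An intrinsic dimension function is a function $\partial$ assigning to every space with metric and measure a value in $[0,\infty)\cup\{+\infty\}$ and satisfying: (Axiom 1, concentration) for every sequence $(X_n)$ of spaces with metric and measure, $\partial(X_n)\uparrow\infty$ if and only if $(X_n)$ is a Lévy family; (Axiom 2, smooth dependence) if $d_{conc}(X_n,X)\to 0$ then $\partial(X_n)\to\partial(X)$; (Axiom 3, normalization) $\partial(\mathbb S^n)=\Theta(n)$, where $\mathbb S^n$ is the unit sphere in $\mathbb R^{n+1}$ with the Euclidean distance and the rotation-invariant probability measure. *)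

theory Defs
  imports "HOL-Analysis.Analysis" "HOL-Probability.Probability"
begin

type_synonym 'a mmspace = "'a metric \<times> 'a measure"

definition borel_sets_of :: "'a metric \<Rightarrow> 'a set set" where
  "borel_sets_of m = sigma_sets (mspace m) {U. openin (mtopology_of m) U}"

definition mm_space :: "'a mmspace \<Rightarrow> bool" where
  "mm_space X \<longleftrightarrow> prob_space (snd X) \<and> space (snd X) = mspace (fst X)
     \<and> sets (snd X) = borel_sets_of (fst X)"

definition Lip1 :: "'a metric \<Rightarrow> ('a \<Rightarrow> real) set" where
  "Lip1 m = {f. \<forall>x\<in>mspace m. \<forall>y\<in>mspace m. \<bar>f x - f y\<bar> \<le> mdist m x y}"

definition is_median :: "'a mmspace \<Rightarrow> ('a \<Rightarrow> real) \<Rightarrow> real \<Rightarrow> bool" where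
  "is_median X f M \<longleftrightarrow>
     measure (snd X) {x \<in> mspace (fst X). f x \<ge> M} \<ge> 1/2 \<and>
     measure (snd X) {x \<in> mspace (fst X). f x \<le> M} \<ge> 1/2"

definition conc_fun :: "'a mmspace \<Rightarrow> real \<Rightarrow> real" where
  "conc_fun X \<epsilon> = (if \<epsilon> = 0 then 1/2 else
     Sup {measure (snd X) {x \<in> mspace (fst X). f x \<ge> M + \<epsilon>} | f M.
            f \<in> Lip1 (fst X) \<and> is_median X f M})"

definition levy_family :: "(nat \<Rightarrow> 'a mmspace) \<Rightarrow> bool" where
  "levy_family Xs \<longleftrightarrow> (\<forall>\<epsilon>>0. (\<lambda>n. conc_fun (Xs n) \<epsilon>) \<longlonglongrightarrow> 0)"

definition parametrization :: "'a mmspace \<Rightarrow> (real \<Rightarrow> 'a) \<Rightarrow> bool" where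
  "parametrization X \<phi> \<longleftrightarrow> (\<forall>t\<in>{0..1}. \<phi> t \<in> mspace (fst X)) \<and>
     (\<forall>A\<in>sets (snd X). \<phi> -` A \<inter> {0..1} \<in> sets lebesgue \<and>
        measure lebesgue (\<phi> -` A \<inter> {0..1}) = measure (snd X) A)"

(* metric of convergence in measure on functions on [0,1] *)
definition me1 :: "(real \<Rightarrow> real) \<Rightarrow> (real \<Rightarrow> real) \<Rightarrow> real" where
  "me1 f g = Inf {\<epsilon>. \<epsilon> > 0 \<and> measure lebesgue {t \<in> {0..1}. \<bar>f t - g t\<bar> > \<epsilon>} < \<epsilon>}"

definition hausdorff_me1 :: "(real \<Rightarrow> real) set \<Rightarrow> (real \<Rightarrow> real) set \<Rightarrow> real" where
  "hausdorff_me1 F G = max (SUP f\<in>F. INF g\<in>G. me1 f g) (SUP g\<in>G. INF f\<in>F. me1 f g)"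

(* Gromov distance (infimum over the empty set is \<infinity>) *)
definition d_conc :: "'a mmspace \<Rightarrow> 'a mmspace \<Rightarrow> ennreal" where
  "d_conc X Y = (INF \<phi>\<psi> \<in> {(\<phi>, \<psi>). parametrization X \<phi> \<and> parametrization Y \<psi>}.
      ennreal (hausdorff_me1 ((\<lambda>f. f \<circ> fst \<phi>\<psi>) ` Lip1 (fst X))
                             ((\<lambda>g. g \<circ> snd \<phi>\<psi>) ` Lip1 (fst Y))))"

(* the unit sphere S^n in R^(n+1), with R^(n+1) embedded in nat => real *)
definition sphere_set :: "nat \<Rightarrow> (nat \<Rightarrow> real) set" where
  "sphere_set n = {x. (\<forall>i>n. x i = 0) \<and> (\<Sum>i\<le>n. (x i)\<^sup>2) = 1}"

definition eucl_dist :: "nat \<Rightarrow> (nat \<Rightarrow> real) \<Rightarrow> (nat \<Rightarrow> real) \<Rightarrow> real" where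
  "eucl_dist n x y = sqrt (\<Sum>i\<le>n. (x i - y i)\<^sup>2)"

definition is_sphere_space :: "nat \<Rightarrow> 'a mmspace \<Rightarrow> bool" where
  "is_sphere_space n X \<longleftrightarrow> mm_space X \<and>
     (\<exists>h. bij_betw h (mspace (fst X)) (sphere_set n) \<and>
          (\<forall>x\<in>mspace (fst X). \<forall>y\<in>mspace (fst X). eucl_dist n (h x) (h y) = mdist (fst X) x y)) \<and>
     (\<forall>g. bij_betw g (mspace (fst X)) (mspace (fst X)) \<and>
          (\<forall>x\<in>mspace (fst X). \<forall>y\<in>mspace (fst X). mdist (fst X) (g x) (g y) = mdist (fst X) x y)
        \<longrightarrow> (\<forall>A\<in>sets (snd X). measure (snd X) (g -` A \<inter> mspace (fst X)) = measure (snd X) A))"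

definition intrinsic_dimension_function :: "('a mmspace \<Rightarrow> ennreal) \<Rightarrow> bool" where
  "intrinsic_dimension_function idim \<longleftrightarrow>
     (\<forall>Xs. (\<forall>n. mm_space (Xs n)) \<longrightarrow>
        (((\<lambda>n. idim (Xs n)) \<longlonglongrightarrow> \<infinity>) \<longleftrightarrow> levy_family Xs)) \<and>
     (\<forall>Xs Y. (\<forall>n. mm_space (Xs n)) \<and> mm_space Y \<and> (\<lambda>n. d_conc (Xs n) Y) \<longlonglongrightarrow> 0
        \<longrightarrow> (\<lambda>n. idim (Xs n)) \<longlonglongrightarrow> idim Y) \<and>
     (\<exists>c C N. c > 0 \<and> C > 0 \<and> (\<forall>n\<ge>N. \<forall>X. is_sphere_space n X \<longrightarrow>
        ennreal (c * real n) \<le> idim X \<and> idim X \<le> ennreal (C * real n)))"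

definition full_support :: "'a mmspace \<Rightarrow> bool" where
  "full_support X \<longleftrightarrow> (\<forall>x\<in>mspace (fst X). \<forall>r>0. measure (snd X) (mball_of (fst X) x r) > 0)"

end

theory Submission
  imports Defs
begin

text \<open>Applied to the constant sequence \<open>X, X, \<dots>\<close> it
  says that \<open>\<partial>(X) = \<infinity>\<close> exactly when \<open>\<alpha>\<^sub>X(\<epsilon>) = 0\<close> for all \<open>\<epsilon> > 0\<close>. On a singleton every
  feature is constant, so \<open>\<alpha>\<^sub>X\<close> vanishes. If \<open>X\<close> has two points, the distance \<open>f\<close> from one of
  them is a non-constant feature, so some point \<open>p\<close> lies off a median \<open>M\<close> of \<open>f\<close>; the ball of
  radius \<open>r = |f p - M| / 2\<close> around \<open>p\<close> has positive measure by full support and lies in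
  \<open>{f \<ge> M + r}\<close> (or in \<open>{-f \<ge> -M + r}\<close>), whence \<open>\<alpha>\<^sub>X(r) > 0\<close>.\<close>

lemma (in real_distribution) median_exists:
  "\<exists>m. measure M {..m} \<ge> 1/2 \<and> measure M {m..} \<ge> 1/2"
proof -
  define A where "A = {t. cdf M t \<ge> 1/2}"
  have "\<forall>\<^sub>F t in at_top. cdf M t > 1/2"
    using cdf_lim_at_top_prob by (rule order_tendstoD) simp
  then have A_ne: "A \<noteq> {}"
    unfolding A_def eventually_at_top_linorder by (auto intro: less_imp_le)
  have "\<forall>\<^sub>F t in at_bot. cdf M t < 1/2"
    using cdf_lim_at_bot by (rule order_tendstoD) simp
  then obtain b where b: "\<And>t. t \<le> b \<Longrightarrow> cdf M t < 1/2"
    by (auto simp: eventually_at_bot_linorder)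
  have A_bdd: "bdd_below A"
  proof (rule bdd_belowI)
    fix t assume "t \<in> A"
    then show "b \<le> t" using b[of t] by (cases "t \<le> b") (auto simp: A_def)
  qed
  define m where "m = Inf A"
  have "cdf M m \<ge> 1/2"
  proof (rule tendsto_lowerbound[OF cdf_is_right_cont[of m, unfolded continuous_within]])
    show "\<forall>\<^sub>F t in at_right m. cdf M t \<ge> 1/2"
      using eventually_at_right_less
    proof (rule eventually_mono)
      fix t assume "m < t"
      then obtain s where "s \<in> A" "s < t" using cInf_lessD[OF A_ne] by (auto simp: m_def)
      then show "cdf M t \<ge> 1/2" using cdf_nondecreasing[of s t] by (simp add: A_def)
    qed
  qed simp
  moreover have "measure M {..<m} \<le> 1/2"
  proof (rule tendsto_upperbound[OF cdf_at_left])
    have "\<forall>\<^sub>F t in at_left m. t \<in> {m - 1<..<m}"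
      by (rule eventually_at_left_real) simp
    then show "\<forall>\<^sub>F t in at_left m. cdf M t \<le> 1/2"
    proof (rule eventually_mono)
      fix t assume "t \<in> {m - 1<..<m}"
      then have "t \<notin> A" using cInf_lower[OF _ A_bdd] by (force simp: m_def)
      then show "cdf M t \<le> 1/2" by (simp add: A_def)
    qed
  qed simp
  then have "measure M {m..} \<ge> 1/2"
    using prob_compl[of "{..<m}"] by (simp add: Compl_eq_Diff_UNIV[symmetric] not_less)
  ultimately show ?thesis by (auto simp: cdf_def)
qed

lemma (in prob_space) median_exists_measurable:
  fixes f :: "'a \<Rightarrow> real"
  assumes "f \<in> borel_measurable M"
  shows "\<exists>m. prob {x \<in> space M. f x \<le> m} \<ge> 1/2 \<and> prob {x \<in> space M. m \<le> f x} \<ge> 1/2"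
proof -
  obtain m where "measure (distr M borel f) {..m} \<ge> 1/2" "measure (distr M borel f) {m..} \<ge> 1/2"
    using real_distribution.median_exists[OF real_distribution_distr[OF assms]] by blast
  then show ?thesis
    using assms by (auto simp: measure_distr vimage_def Int_def conj_commute)
qed

lemma Lip1_continuous_map:
  assumes "f \<in> Lip1 m"
  shows "continuous_map (mtopology_of m) euclidean f"
proof -
  have "Lipschitz_continuous_map m euclidean_metric f"
    using assms unfolding Lipschitz_continuous_map_def Lip1_def
    by (intro conjI exI[of _ 1]) (auto simp: dist_real_def)
  then show ?thesis
    using Lipschitz_continuous_imp_continuous_map by fastforce
qed

lemma Lip1_borel_measurable:
  assumes X: "mm_space X" and f: "f \<in> Lip1 (fst X)"
  shows "f \<in> borel_measurable (snd X)"
  unfolding borel_measurable_iff_less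
proof
  fix c
  have "openin (mtopology_of (fst X)) {x \<in> mspace (fst X). f x < c}"
    using openin_continuous_map_preimage[OF Lip1_continuous_map[OF f], of "{..<c}"] by simp
  then show "{x \<in> space (snd X). f x < c} \<in> sets (snd X)"
    using X by (auto simp: mm_space_def borel_sets_of_def)
qed

lemma Lip1_median_exists:
  assumes X: "mm_space X" and f: "f \<in> Lip1 (fst X)"
  shows "\<exists>M. is_median X f M"
proof -
  interpret prob_space "snd X"
    using X by (simp add: mm_space_def)
  show ?thesis
    using median_exists_measurable[OF Lip1_borel_measurable[OF X f]] X
    by (auto simp: is_median_def mm_space_def)
qed

lemma mdist_in_Lip1: "a \<in> mspace m \<Longrightarrow> mdist m a \<in> Lip1 m"
  using mdist_triangle[of a m] by (fastforce simp: Lip1_def abs_le_iff mdist_commute)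

lemma uminus_in_Lip1: "f \<in> Lip1 m \<Longrightarrow> (\<lambda>x. - f x) \<in> Lip1 m"
  by (auto simp: Lip1_def abs_minus_commute)

lemma is_median_uminus: "is_median X f M \<Longrightarrow> is_median X (\<lambda>x. - f x) (- M)"
  by (simp add: is_median_def)

lemma measure_above_median_le_conc_fun:
  assumes X: "mm_space X" and f: "f \<in> Lip1 (fst X)" and M: "is_median X f M" and "\<epsilon> \<noteq> 0"
  shows "measure (snd X) {x \<in> mspace (fst X). f x \<ge> M + \<epsilon>} \<le> conc_fun X \<epsilon>"
proof -
  interpret prob_space "snd X"
    using X by (simp add: mm_space_def)
  show ?thesis
    unfolding conc_fun_def using assms
    by (auto intro!: cSup_upper bdd_aboveI[of _ 1])
qed

lemma conc_fun_pos_above_median: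
  assumes X: "mm_space X" and full: "full_support X"
    and f: "f \<in> Lip1 (fst X)" and M: "is_median X f M"
    and p: "p \<in> mspace (fst X)" and r: "0 < r" "M + r < f p"
  shows "conc_fun X r > 0"
proof -
  interpret prob_space "snd X"
    using X by (simp add: mm_space_def)
  define s where "s = f p - (M + r)"
  have ball_pos: "0 < measure (snd X) (mball_of (fst X) p s)"
    using full p r by (simp add: full_support_def s_def)
  have ball_above: "mball_of (fst X) p s \<subseteq> {x \<in> mspace (fst X). f x \<ge> M + r}"
  proof
    fix y assume y: "y \<in> mball_of (fst X) p s"
    then have "\<bar>f p - f y\<bar> < s"
      using f p by (force simp: Lip1_def)
    then have "f y \<ge> M + r"
      unfolding s_def by linarith
    then show "y \<in> {x \<in> mspace (fst X). f x \<ge> M + r}"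
      using y by simp
  qed
  have "{x \<in> space (snd X). f x \<ge> M + r} \<in> sets (snd X)"
    using Lip1_borel_measurable[OF X f] by measurable
  then have "measure (snd X) (mball_of (fst X) p s)
      \<le> measure (snd X) {x \<in> mspace (fst X). f x \<ge> M + r}"
    using X ball_above by (intro finite_measure_mono) (auto simp: mm_space_def)
  also have "\<dots> \<le> conc_fun X r"
    using measure_above_median_le_conc_fun[OF X f M] r by simp
  finally show ?thesis
    using ball_pos by linarith
qed

lemma conc_fun_pos_if_two_points:
  assumes X: "mm_space X" and full: "full_support X"
    and a: "a \<in> mspace (fst X)" and b: "b \<in> mspace (fst X)" and "a \<noteq> b"
  shows "\<exists>\<epsilon>>0. conc_fun X \<epsilon> > 0"
proof -
  define f where "f = mdist (fst X) a"
  have f: "f \<in> Lip1 (fst X)"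
    using mdist_in_Lip1[OF a] by (simp add: f_def)
  obtain M where M: "is_median X f M"
    using Lip1_median_exists[OF X f] by blast
  have "f a = 0" "f b > 0"
    using a b \<open>a \<noteq> b\<close> mdist_nonneg[of "fst X" a b] by (auto simp: f_def order_le_less)
  then obtain p where p: "p \<in> mspace (fst X)" "f p \<noteq> M"
    using a b by (cases "M = 0") auto
  show ?thesis
  proof (cases "M < f p")
    case True
    then obtain r where "0 < r" "M + r < f p"
      using dense[of 0 "f p - M"] by auto
    then show ?thesis
      using conc_fun_pos_above_median[OF X full f M p(1)] by blast
  next
    case False
    then obtain r where "0 < r" "- M + r < - f p"
      using dense[of 0 "M - f p"] p(2) by auto
    then show ?thesis
      using conc_fun_pos_above_median[OF X full uminus_in_Lip1[OF f] is_median_uminus[OF M] p(1)]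
      by blast
  qed
qed

lemma is_median_singleton:
  assumes single: "mspace (fst X) = {x0}" and M: "is_median X f M"
  shows "M = f x0"
proof -
  have "{x \<in> mspace (fst X). M \<le> f x} \<noteq> {}"
  proof
    assume empty: "{x \<in> mspace (fst X). M \<le> f x} = {}"
    show False
      using M[unfolded is_median_def empty] by simp
  qed
  moreover have "{x \<in> mspace (fst X). f x \<le> M} \<noteq> {}"
  proof
    assume empty: "{x \<in> mspace (fst X). f x \<le> M} = {}"
    show False
      using M[unfolded is_median_def empty] by simp
  qed
  ultimately show ?thesis
    using single by auto
qed

lemma conc_fun_singleton:
  assumes X: "mm_space X" and single: "mspace (fst X) = {x0}" and "\<epsilon> > 0"
  shows "conc_fun X \<epsilon> = 0"
proof -
  have null: "measure (snd X) {x \<in> mspace (fst X). f x \<ge> M + \<epsilon>} = 0" if "is_median X f M" for f M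
  proof -
    have "{x \<in> mspace (fst X). f x \<ge> M + \<epsilon>} = {}"
      using is_median_singleton[OF single that] single \<open>\<epsilon> > 0\<close> by auto
    then show ?thesis
      by (simp only: measure_empty)
  qed
  have const: "(\<lambda>_. 0) \<in> Lip1 (fst X)"
    by (simp add: Lip1_def)
  then obtain M0 where M0: "is_median X (\<lambda>_. 0) M0"
    using Lip1_median_exists[OF X] by blast
  have "{measure (snd X) {x \<in> mspace (fst X). f x \<ge> M + \<epsilon>} | f M.
      f \<in> Lip1 (fst X) \<and> is_median X f M} = {0}" (is "?values = _")
  proof (intro equalityI subsetI)
    fix v :: real assume "v \<in> ?values"
    then show "v \<in> {0}"
      using null by auto
  next
    fix v :: real assume "v \<in> {0}"
    then show "v \<in> ?values"
      using null[OF M0] const M0 by force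
  qed
  then show ?thesis
    using \<open>\<epsilon> > 0\<close> by (simp add: conc_fun_def)
qed

lemma levy_family_const_iff: "levy_family (\<lambda>_. X) \<longleftrightarrow> (\<forall>\<epsilon>>0. conc_fun X \<epsilon> = 0)"
  by (simp add: levy_family_def LIMSEQ_const_iff)

lemma intrinsic_dimension_infinite_iff:
  assumes "intrinsic_dimension_function idim" and "mm_space X"
  shows "idim X = \<infinity> \<longleftrightarrow> (\<forall>\<epsilon>>0. conc_fun X \<epsilon> = 0)"
proof -
  have concentration:
    "\<forall>Xs. (\<forall>n. mm_space (Xs n)) \<longrightarrow> ((\<lambda>n. idim (Xs n)) \<longlonglongrightarrow> \<infinity>) = levy_family Xs"
    using assms(1) unfolding intrinsic_dimension_function_def by blast
  have "((\<lambda>_. idim X) \<longlonglongrightarrow> \<infinity>) \<longleftrightarrow> levy_family (\<lambda>_. X)"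
    using spec[OF concentration, of "\<lambda>_. X"] assms(2) by simp
  then show ?thesis
    by (simp add: LIMSEQ_const_iff levy_family_const_iff)
qed

theorem mainTheorem1:
  fixes idim :: "'a mmspace \<Rightarrow> ennreal" and X :: "'a mmspace"
  assumes "intrinsic_dimension_function idim"
    and "mm_space X"
    and "full_support X"
  shows "idim X = \<infinity> \<longleftrightarrow> (\<exists>x. mspace (fst X) = {x})"
proof
  assume "idim X = \<infinity>"
  then have "\<forall>a\<in>mspace (fst X). \<forall>b\<in>mspace (fst X). a = b"
    using intrinsic_dimension_infinite_iff[OF assms(1,2)]
      conc_fun_pos_if_two_points[OF assms(2,3)] by force
  moreover obtain x where "x \<in> mspace (fst X)"
    using assms(2) prob_space.not_empty by (fastforce simp: mm_space_def)
  ultimately show "\<exists>x. mspace (fst X) = {x}"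
    by auto
next
  assume "\<exists>x. mspace (fst X) = {x}"
  then show "idim X = \<infinity>"
    using intrinsic_dimension_infinite_iff[OF assms(1,2)] conc_fun_singleton[OF assms(2)]
    by blast
qed

end
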